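(* Let $G<\operatorname{Aut}(T)$ be the group generated by the automorphisms $a,b,c$ of the $6$-ary rooted tree $T=\{1,\dots,6\}^*$ defined by $a=\langle\!\langle b^{-1},1,b,c^{-1},1,c\rangle\!\rangle(13)(25)(46)$, $b=\langle\!\langle b,b^{-1},1,c,c^{-1},1\rangle\!\rangle(2356)$, $c=(123)(456)$. Then for every $n\in\mathbb{N}$, $G$ contains a subgroup isomorphic to $\mathbb{Z}^n$.
   Context: $T$ is the tree of finite words over $X=\{1,\dots,6\}$; automorphisms act on the right. The wreath recursion $g=\langle\!\langle g_1,\dots,g_6\rangle\!\rangle\sigma$ means $(xv)^g=x^\sigma v^{g_x}$ for $x\in X$, $v\in X^*$. (This $G$ is $\operatorname{IMG}(f_1)$ for $f_1(z)=\frac{2(z^2-3/4)^3}{z^2(z^2-9/8)^2}-1$.) *)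

theory Defs
  imports "HOL-Algebra.Algebra"
begin

datatype letter = L1 | L2 | L3 | L4 | L5 | L6

type_synonym word = "letter list"

fun sigma_a :: "letter \<Rightarrow> letter" where
  "sigma_a L1 = L3" | "sigma_a L3 = L1" | "sigma_a L2 = L5" | "sigma_a L5 = L2"
| "sigma_a L4 = L6" | "sigma_a L6 = L4"

fun sigma_b :: "letter \<Rightarrow> letter" where
  "sigma_b L1 = L1" | "sigma_b L2 = L3" | "sigma_b L3 = L5" | "sigma_b L5 = L6"
| "sigma_b L6 = L2" | "sigma_b L4 = L4"

fun sigma_b_inv :: "letter \<Rightarrow> letter" where
  "sigma_b_inv L1 = L1" | "sigma_b_inv L3 = L2" | "sigma_b_inv L5 = L3" | "sigma_b_inv L6 = L5"
| "sigma_b_inv L2 = L6" | "sigma_b_inv L4 = L4"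

fun sigma_c :: "letter \<Rightarrow> letter" where
  "sigma_c L1 = L2" | "sigma_c L2 = L3" | "sigma_c L3 = L1"
| "sigma_c L4 = L5" | "sigma_c L5 = L6" | "sigma_c L6 = L4"

fun sigma_c_inv :: "letter \<Rightarrow> letter" where
  "sigma_c_inv L2 = L1" | "sigma_c_inv L3 = L2" | "sigma_c_inv L1 = L3"
| "sigma_c_inv L5 = L4" | "sigma_c_inv L6 = L5" | "sigma_c_inv L4 = L6"

definition aut_c :: "word \<Rightarrow> word" where
  "aut_c w = (case w of [] \<Rightarrow> [] | x # v \<Rightarrow> sigma_c x # v)"

definition aut_c_inv :: "word \<Rightarrow> word" where
  "aut_c_inv w = (case w of [] \<Rightarrow> [] | x # v \<Rightarrow> sigma_c_inv x # v)"

text \<open>Wreath recursion with right action: (x v)^g = x^sigma v^(g_x).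
  b = <<b, b^-1, 1, c, c^-1, 1>> (2356);
  b^-1 acts by (y w)^(b^-1) = x w^((b_x)^-1) where x = y^(sigma_b^-1).\<close>
fun aut_b :: "word \<Rightarrow> word" and aut_b_inv :: "word \<Rightarrow> word" where
  "aut_b [] = []"
| "aut_b (x # v) = sigma_b x # (case x of
      L1 \<Rightarrow> aut_b v | L2 \<Rightarrow> aut_b_inv v | L3 \<Rightarrow> v
    | L4 \<Rightarrow> aut_c v | L5 \<Rightarrow> aut_c_inv v | L6 \<Rightarrow> v)"
| "aut_b_inv [] = []"
| "aut_b_inv (y # w) = sigma_b_inv y # (case sigma_b_inv y of
      L1 \<Rightarrow> aut_b_inv w | L2 \<Rightarrow> aut_b w | L3 \<Rightarrow> w
    | L4 \<Rightarrow> aut_c_inv w | L5 \<Rightarrow> aut_c w | L6 \<Rightarrow> w)"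

fun aut_a :: "word \<Rightarrow> word" where
  "aut_a [] = []"
| "aut_a (x # v) = sigma_a x # (case x of
      L1 \<Rightarrow> aut_b_inv v | L2 \<Rightarrow> v | L3 \<Rightarrow> aut_b v
    | L4 \<Rightarrow> aut_c_inv v | L5 \<Rightarrow> v | L6 \<Rightarrow> aut_c v)"

text \<open>The group of all bijections of the vertex set of T, with the right-action
  product convention: v^(gh) = (v^g)^h, i.e. g \<otimes> h = h \<circ> g.  Aut(T) is a
  subgroup of it, and G is generated inside it.\<close>
definition word_perm_group :: "(word \<Rightarrow> word) monoid" where
  "word_perm_group = \<lparr>carrier = {f. bij f}, monoid.mult = (\<lambda>g h. h \<circ> g), one = id\<rparr>"

definition G_group_carrier :: "(word \<Rightarrow> word) set" where
  "G_group_carrier = generate word_perm_group {aut_a, aut_b, aut_c}"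

definition Zn_group :: "nat \<Rightarrow> (nat \<Rightarrow> int) monoid" where
  "Zn_group n = product_group {..<n} (\<lambda>_. integer_group)"

end

theory Submission
  imports Defs
begin

text \<open>
  Write x = b^3 c^-1 and y = c^-1 b^3. Both x^2 and y^2 fix the first level; below the letter 1
  their sections are again x and y, while below every other letter the two sections either
  coincide or one of them has order dividing 9. Hence the commutator [x^(9*2^j), y^(9*2^j)] acts as
  kappa = [x^9, y^9] below the vertex 1^j and trivially elsewhere. Along the path 131115 the section
  of kappa^243 is x, which has infinite order, so kappa has infinite order. Conjugation by x^(2^j)
  moves the copy of kappa at 1^(j+1) to a copy of a conjugate of kappa at 1^j 3; these vertices
  span pairwise disjoint subtrees, so the n copies generate a free abelian group of rank n.
\<close>

section \<open>Generator words and the wreath recursion\<close>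

datatype gen = Gb | Gbi | Gc | Gci

fun aut_of_gen :: "gen \<Rightarrow> word \<Rightarrow> word" where
  "aut_of_gen Gb = aut_b" | "aut_of_gen Gbi = aut_b_inv"
| "aut_of_gen Gc = aut_c" | "aut_of_gen Gci = aut_c_inv"

fun aut_of :: "gen list \<Rightarrow> word \<Rightarrow> word" where
  "aut_of [] v = v"
| "aut_of (g # gs) v = aut_of gs (aut_of_gen g v)"

text \<open>The image of a letter and the section at it, the latter as a generator word.\<close>

fun gen_wreath :: "gen \<Rightarrow> letter \<Rightarrow> letter \<times> gen list" where
  "gen_wreath Gb x = (sigma_b x, case x of
      L1 \<Rightarrow> [Gb] | L2 \<Rightarrow> [Gbi] | L3 \<Rightarrow> [] | L4 \<Rightarrow> [Gc] | L5 \<Rightarrow> [Gci] | L6 \<Rightarrow> [])"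
| "gen_wreath Gbi y = (sigma_b_inv y, case sigma_b_inv y of
      L1 \<Rightarrow> [Gbi] | L2 \<Rightarrow> [Gb] | L3 \<Rightarrow> [] | L4 \<Rightarrow> [Gci] | L5 \<Rightarrow> [Gc] | L6 \<Rightarrow> [])"
| "gen_wreath Gc x = (sigma_c x, [])"
| "gen_wreath Gci x = (sigma_c_inv x, [])"

fun wreath :: "gen list \<Rightarrow> letter \<Rightarrow> letter \<times> gen list" where
  "wreath [] x = (x, [])"
| "wreath (g # gs) x =
     (let (y, s) = gen_wreath g x; (z, t) = wreath gs y in (z, s @ t))"

lemma aut_of_gen_Nil: "aut_of_gen g [] = []"
  by (cases g) (simp_all add: aut_c_def aut_c_inv_def)

lemma aut_of_gen_Cons:
  "aut_of_gen g (x # v) = fst (gen_wreath g x) # aut_of (snd (gen_wreath g x)) v"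
  by (cases g; cases x) (simp_all add: aut_c_def aut_c_inv_def)

lemma aut_of_append: "aut_of (u @ w) v = aut_of w (aut_of u v)"
  by (induction u arbitrary: v) auto

lemma aut_of_Nil [simp]: "aut_of w [] = []"
  by (induction w) (auto simp: aut_of_gen_Nil)

lemma aut_of_Cons: "aut_of w (x # v) = fst (wreath w x) # aut_of (snd (wreath w x)) v"
  by (induction w arbitrary: x v) (simp_all add: aut_of_gen_Cons split_def aut_of_append Let_def)

lemma aut_of_replicate: "aut_of (concat (replicate n w)) = aut_of w ^^ n"
  by (induction n) (simp_all add: fun_eq_iff aut_of_append funpow_Suc_right del: funpow.simps)

lemma sigma_inverses [simp]:
  "sigma_b_inv (sigma_b x) = x" "sigma_b (sigma_b_inv x) = x"
  "sigma_c_inv (sigma_c x) = x" "sigma_c (sigma_c_inv x) = x"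
  by (cases x; simp)+

lemma aut_c_inverses [simp]: "aut_c_inv (aut_c v) = v" "aut_c (aut_c_inv v) = v"
  by (auto simp: aut_c_def aut_c_inv_def split: list.splits)

lemma aut_c_square: "aut_c (aut_c v) = aut_c_inv v" "aut_c_inv (aut_c_inv v) = aut_c v"
  by (cases v; cases "hd v"; simp add: aut_c_def aut_c_inv_def)+

lemma aut_b_inverses [simp]: "aut_b_inv (aut_b v) = v" "aut_b (aut_b_inv v) = v"
proof -
  have "aut_b_inv (aut_b v) = v \<and> aut_b (aut_b_inv v) = v"
  proof (induction v)
    case (Cons x v)
    then show ?case by (cases x) simp_all
  qed simp
  then show "aut_b_inv (aut_b v) = v" "aut_b (aut_b_inv v) = v" by auto
qed

text \<open>Free reduction in \<open>\<langle>b\<rangle> * \<langle>c | c\<^sup>3\<rangle>\<close>; it keeps the sections computed below short.\<close>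

fun reduce_cons :: "gen \<Rightarrow> gen list \<Rightarrow> gen list" where
  "reduce_cons g [] = [g]"
| "reduce_cons Gb (Gbi # t) = t" | "reduce_cons Gbi (Gb # t) = t"
| "reduce_cons Gc (Gci # t) = t" | "reduce_cons Gci (Gc # t) = t"
| "reduce_cons Gc (Gc # t) = reduce_cons Gci t" | "reduce_cons Gci (Gci # t) = reduce_cons Gc t"
| "reduce_cons g (h # t) = g # h # t"

fun reduce :: "gen list \<Rightarrow> gen list" where
  "reduce [] = []"
| "reduce (g # gs) = reduce_cons g (reduce gs)"

lemma aut_of_reduce_cons: "aut_of (reduce_cons g t) = aut_of (g # t)"
  by (induction g t rule: reduce_cons.induct) (simp_all add: fun_eq_iff aut_c_square)

lemma aut_of_reduce: "aut_of (reduce w) = aut_of w"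
  by (induction w) (simp_all add: fun_eq_iff aut_of_reduce_cons)

lemma aut_of_Cons_reduce:
  "fst (wreath w x) = y \<Longrightarrow> reduce (snd (wreath w x)) = s \<Longrightarrow> aut_of w (x # v) = y # aut_of s v"
  by (metis aut_of_Cons aut_of_reduce)

lemma funpow_fixing_letter:
  "(\<And>v. f (x # v) = x # g v) \<Longrightarrow> (f ^^ n) (x # v) = x # (g ^^ n) v"
  by (induction n arbitrary: v) auto

fun section_along :: "(letter \<times> nat) list \<Rightarrow> gen list \<Rightarrow> gen list option" where
  "section_along [] h = Some h"
| "section_along ((x, k) # ps) h =
     (let (y, s) = wreath (concat (replicate k h)) x
      in if y = x then section_along ps (reduce s) else None)"

lemma section_along_Some:
  assumes "section_along ps h = Some s"
  shows "(aut_of h ^^ (prod_list (map snd ps) * m)) (map fst ps @ v) = map fst ps @ (aut_of s ^^ m) v"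
  using assms
proof (induction ps arbitrary: h)
  case (Cons p ps)
  obtain x k where p: "p = (x, k)" by fastforce
  obtain s' where s': "wreath (concat (replicate k h)) x = (x, s')"
    and rest: "section_along ps (reduce s') = Some s"
    using Cons.prems by (auto simp: p split: prod.splits if_splits)
  have "aut_of (concat (replicate k h)) (x # u) = x # aut_of (reduce s') u" for u
    by (simp add: aut_of_Cons s' aut_of_reduce)
  then have "((aut_of h ^^ k) ^^ (prod_list (map snd ps) * m)) (x # u) =
      x # (aut_of (reduce s') ^^ (prod_list (map snd ps) * m)) u" for u
    by (intro funpow_fixing_letter) (simp add: aut_of_replicate)
  then show ?case
    by (simp add: p Cons.IH[OF rest] funpow_mult mult.assoc)
qed simp

section \<open>Deciding equality of generator words\<close>

definition letters :: "letter list" where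
  "letters = [L1, L2, L3, L4, L5, L6]"

lemma in_letters: "x \<in> set letters"
  by (cases x) (auto simp: letters_def)

definition successors :: "gen list \<times> gen list \<Rightarrow> (gen list \<times> gen list) list" where
  "successors p =
     map (\<lambda>x. (reduce (snd (wreath (fst p) x)), reduce (snd (wreath (snd p) x)))) letters"

definition bisimulation :: "(gen list \<times> gen list) list \<Rightarrow> bool" where
  "bisimulation R = list_all (\<lambda>p.
     list_all (\<lambda>x. fst (wreath (fst p) x) = fst (wreath (snd p) x)) letters \<and>
     list_all (\<lambda>q. q \<in> set R) (successors p)) R"

lemma aut_of_eq_if_bisimulation:
  assumes "bisimulation R" and "(u, w) \<in> set R"
  shows "aut_of u = aut_of w"
proof
  fix v show "aut_of u v = aut_of w v"
    using assms(2)
  proof (induction v arbitrary: u w)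
    case (Cons x v)
    from assms(1) Cons.prems have "fst (wreath u x) = fst (wreath w x)"
      and succ: "(reduce (snd (wreath u x)), reduce (snd (wreath w x))) \<in> set R"
      by (auto simp: bisimulation_def successors_def list_all_iff in_letters)
    then show ?case
      using Cons.IH[OF succ] by (simp add: aut_of_Cons aut_of_reduce)
  qed simp
qed

text \<open>Closes a list of pairs under taking sections. The fuel only bounds the computation, which
  is carried out by \<open>code_simp\<close>.\<close>

fun saturate :: "nat \<Rightarrow> (gen list \<times> gen list) list \<Rightarrow> (gen list \<times> gen list) list option" where
  "saturate 0 R = None"
| "saturate (Suc n) R =
     (if bisimulation R then Some R else saturate n (remdups (R @ concat (map successors R))))"

lemma saturate_Some: "saturate n R = Some S \<Longrightarrow> set R \<subseteq> set S \<and> bisimulation S"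
  by (induction n R rule: saturate.induct) (auto split: if_splits)

lemma aut_of_eq_if_saturate:
  assumes "saturate n [(u, w)] \<noteq> None"
  shows "aut_of u = aut_of w"
  using assms saturate_Some aut_of_eq_if_bisimulation by fastforce

abbreviation P where "P \<equiv> word_perm_group"

lemma P_simps [simp]:
  "carrier P = {f. bij f}" "g \<otimes>\<^bsub>P\<^esub> h = h \<circ> g" "\<one>\<^bsub>P\<^esub> = id"
  by (simp_all add: word_perm_group_def)

text \<open>In HOL-Algebra the syntax \<open>inv\<close> refers to a group structure, so inverse functions are
  written \<open>inv_into UNIV\<close>.\<close>

lemma bij_comp_inv_into: "bij f \<Longrightarrow> f \<circ> inv_into UNIV f = id"
  using bij_is_surj surj_iff by blast

lemma group_word_perm_group: "group P"
proof (rule groupI)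
  fix x assume "x \<in> carrier P"
  then show "\<exists>y\<in>carrier P. y \<otimes>\<^bsub>P\<^esub> x = \<one>\<^bsub>P\<^esub>"
    by (intro bexI[of _ "inv_into UNIV x"]) (simp_all add: bij_imp_bij_inv bij_comp_inv_into)
qed (simp_all add: comp_assoc bij_comp)

interpretation P: group P
  by (rule group_word_perm_group)

lemma P_inv: "bij f \<Longrightarrow> inv\<^bsub>P\<^esub> f = inv_into UNIV f"
  by (intro P.inv_equality) (simp_all add: bij_imp_bij_inv bij_comp_inv_into)

lemma P_nat_pow: "f [^]\<^bsub>P\<^esub> (n::nat) = f ^^ n"
  by (induction n) (simp_all add: funpow_Suc_right flip: funpow.simps)

fun gen_inv :: "gen \<Rightarrow> gen" where
  "gen_inv Gb = Gbi" | "gen_inv Gbi = Gb" | "gen_inv Gc = Gci" | "gen_inv Gci = Gc"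

definition inv_gword :: "gen list \<Rightarrow> gen list" where
  "inv_gword w = rev (map gen_inv w)"

lemma aut_of_gen_inv:
  "aut_of_gen (gen_inv g) (aut_of_gen g v) = v" "aut_of_gen g (aut_of_gen (gen_inv g) v) = v"
  by (cases g; simp)+

lemma aut_of_inv_gword:
  "aut_of (inv_gword w) (aut_of w v) = v" "aut_of w (aut_of (inv_gword w) v) = v"
  by (induction w arbitrary: v) (simp_all add: inv_gword_def aut_of_append aut_of_gen_inv)

lemma bij_aut_of: "bij (aut_of w)"
  by (rule o_bij[of "aut_of (inv_gword w)"]) (simp_all add: fun_eq_iff aut_of_inv_gword)

lemma bij_aut_of_pow: "bij (aut_of w ^^ n)"
  by (simp add: bij_aut_of bij_betw_funpow)

lemma aut_of_pow_Nil: "(aut_of w ^^ n) [] = []"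
  by (induction n) simp_all

lemma inv_into_aut_of: "inv_into UNIV (aut_of w) = aut_of (inv_gword w)"
  by (rule inv_equality) (simp_all add: aut_of_inv_gword)

lemma aut_of_comp: "aut_of (u @ w) = aut_of w \<circ> aut_of u"
  by (simp add: fun_eq_iff aut_of_append)

lemma aut_of_single: "aut_of [g] = aut_of_gen g"
  by (simp add: fun_eq_iff)

lemma bij_aut_a: "bij aut_a"
proof -
  have "aut_a (aut_a v) = v" for v
    by (cases v; cases "hd v") simp_all
  then show ?thesis
    by (intro o_bij[of aut_a]) (simp_all add: fun_eq_iff)
qed

lemma subgroup_G: "subgroup G_group_carrier P"
  unfolding G_group_carrier_def using bij_aut_a bij_aut_of[of "[Gb]"] bij_aut_of[of "[Gc]"]
  by (intro P.generate_is_subgroup) (simp add: aut_of_single)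

interpretation G: subgroup G_group_carrier P
  by (rule subgroup_G)

lemma aut_of_in_G: "aut_of w \<in> G_group_carrier"
proof (induction w)
  case Nil
  show ?case using G.one_closed by (simp add: id_def)
next
  case (Cons g w)
  have gens: "aut_b \<in> G_group_carrier" "aut_c \<in> G_group_carrier"
    unfolding G_group_carrier_def by (auto intro: generate.incl)
  have inv: "inv\<^bsub>P\<^esub> aut_of_gen g = aut_of_gen (gen_inv g)" for g
    using P_inv[OF bij_aut_of[of "[g]"]] inv_into_aut_of[of "[g]"]
    by (simp add: aut_of_single inv_gword_def)
  have "aut_b_inv \<in> G_group_carrier" "aut_c_inv \<in> G_group_carrier"
    using G.m_inv_closed[OF gens(1)] G.m_inv_closed[OF gens(2)] inv[of Gb] inv[of Gc] by simp_all
  with gens have "aut_of_gen g \<in> G_group_carrier"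
    by (cases g) simp_all
  moreover have "aut_of (g # w) = aut_of_gen g \<otimes>\<^bsub>P\<^esub> aut_of w"
    by (simp add: fun_eq_iff)
  ultimately show ?case
    using Cons.IH by (simp only: G.m_closed)
qed

section \<open>Automorphisms supported below a vertex\<close>

definition at_vertex :: "word \<Rightarrow> (word \<Rightarrow> word) \<Rightarrow> word \<Rightarrow> word" where
  "at_vertex v f w = (if take (length v) w = v then v @ f (drop (length v) w) else w)"

lemma at_vertex_append [simp]: "at_vertex v f (v @ u) = v @ f u"
  by (simp add: at_vertex_def)

lemma at_vertex_other: "take (length v) w \<noteq> v \<Longrightarrow> at_vertex v f w = w"
  by (simp add: at_vertex_def)

lemma at_vertex_outside: "(\<And>r. w \<noteq> v @ r) \<Longrightarrow> at_vertex v f w = w"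
  by (metis append_take_drop_id at_vertex_other)

lemma at_vertex_Nil: "at_vertex [] f = f"
  by (simp add: fun_eq_iff at_vertex_def)

lemma at_vertex_Cons: "at_vertex (x # v) f = at_vertex [x] (at_vertex v f)"
proof
  fix w show "at_vertex (x # v) f w = at_vertex [x] (at_vertex v f) w"
    by (cases w) (auto simp: at_vertex_def)
qed

lemma at_vertex_comp: "at_vertex v (f \<circ> g) = at_vertex v f \<circ> at_vertex v g"
proof
  fix w show "at_vertex v (f \<circ> g) w = (at_vertex v f \<circ> at_vertex v g) w"
    by (cases "take (length v) w = v")
       (metis append_take_drop_id at_vertex_append comp_apply, simp add: at_vertex_other)
qed

lemma at_vertex_id: "at_vertex v id = id"
  by (simp add: fun_eq_iff at_vertex_def) (metis append_take_drop_id)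

lemma at_vertex_hom: "at_vertex v \<in> hom P P"
proof -
  have "bij (at_vertex v f)" if "bij f" for f
    using that
    by (intro o_bij[of "at_vertex v (inv_into UNIV f)"])
       (simp_all add: bij_comp_inv_into bij_is_inj at_vertex_id flip: at_vertex_comp)
  then show ?thesis
    by (auto simp: hom_def at_vertex_comp)
qed

interpretation at_vertex: group_hom P P "at_vertex v"
  by (simp add: group_hom_def group_hom_axioms_def group_word_perm_group at_vertex_hom)

lemma conj_at_vertex:
  assumes "bij h" "bij g" "\<And>u. h (v @ u) = v' @ g u"
  shows "h \<circ> at_vertex v f \<circ> inv_into UNIV h = at_vertex v' (g \<circ> f \<circ> inv_into UNIV g)"
proof
  fix w
  have h_inv: "inv_into UNIV h (v' @ u) = v @ inv_into UNIV g u" for u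
    using assms by (metis bij_is_inj bij_is_surj inv_f_f surj_f_inv_f)
  show "(h \<circ> at_vertex v f \<circ> inv_into UNIV h) w = at_vertex v' (g \<circ> f \<circ> inv_into UNIV g) w"
  proof (cases "\<exists>u. w = v' @ u")
    case True
    then show ?thesis
      using assms(3) by (auto simp: h_inv)
  next
    case False
    have "inv_into UNIV h w \<noteq> v @ r" for r
      using False assms by (metis bij_is_surj surj_f_inv_f)
    then show ?thesis
      using False assms(1) by (simp add: at_vertex_outside bij_is_surj surj_f_inv_f)
  qed
qed

lemma funpow_double_fixing_letter:
  assumes "\<And>v. f (f (x # v)) = x # g v"
  shows "(f ^^ (2 * m)) (x # v) = x # (g ^^ m) v"
proof -
  have "(f ^^ 2) (x # v) = x # g v" for v
    using assms by (simp add: numeral_2_eq_2)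
  then show ?thesis
    using funpow_fixing_letter[of "f ^^ 2" x g m] by (simp add: funpow_mult)
qed

lemma funpow_eq_id_dvd: "f ^^ k = id \<Longrightarrow> k dvd n \<Longrightarrow> f ^^ n = id"
  by (elim dvdE) (simp flip: funpow_mult)

lemma funpow_conj:
  assumes "bij h"
  shows "(h \<circ> f \<circ> inv_into UNIV h) ^^ n = h \<circ> f ^^ n \<circ> inv_into UNIV h"
  by (induction n) (simp_all add: fun_eq_iff assms bij_is_inj bij_comp_inv_into)

lemma conj_eq_id_iff:
  assumes "bij h"
  shows "h \<circ> f \<circ> inv_into UNIV h = id \<longleftrightarrow> f = id"
proof
  assume "h \<circ> f \<circ> inv_into UNIV h = id"
  then have "inv_into UNIV h (h (f (inv_into UNIV h (h x)))) = inv_into UNIV h (h x)" for x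
    by (metis comp_apply id_apply)
  then show "f = id"
    using assms by (simp add: fun_eq_iff bij_is_inj)
qed (simp add: assms bij_comp_inv_into)

lemma inv_into_fixing_letter:
  assumes "bij f" "bij g" "\<And>v. f (x # v) = x # g v"
  shows "inv_into UNIV f (x # v) = x # inv_into UNIV g v"
  by (metis assms bij_is_inj bij_is_surj inv_f_f surj_f_inv_f)

definition commutator :: "('a \<Rightarrow> 'a) \<Rightarrow> ('a \<Rightarrow> 'a) \<Rightarrow> 'a \<Rightarrow> 'a" where
  "commutator f g = inv_into UNIV g \<circ> inv_into UNIV f \<circ> g \<circ> f"

lemma commutator_fixing_letter:
  assumes "bij f" "bij f'" "\<And>v. f (x # v) = x # f' v"
    and "bij g" "bij g'" "\<And>v. g (x # v) = x # g' v"
  shows "commutator f g (x # v) = x # commutator f' g' v"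
  using assms inv_into_fixing_letter[OF assms(1-3)] inv_into_fixing_letter[OF assms(4-6)]
  by (simp add: commutator_def)

lemma commutator_id:
  "bij g \<Longrightarrow> commutator id g = id" "bij f \<Longrightarrow> commutator f id = id" "bij f \<Longrightarrow> commutator f f = id"
  by (simp_all add: commutator_def bij_is_inj fun_eq_iff)

lemma commutator_aut_of:
  "commutator (aut_of u) (aut_of w) = aut_of (u @ w @ inv_gword u @ inv_gword w)"
  by (simp add: commutator_def inv_into_aut_of aut_of_comp comp_assoc)

lemma commutator_Nil:
  assumes "bij f" "bij g" "f [] = []" "g [] = []"
  shows "commutator f g [] = []"
  by (metis assms bij_is_inj commutator_def comp_apply inv_f_f)

section \<open>Commutators of powers of \<open>x\<close> and \<open>y\<close>\<close>

definition x_gword :: "gen list" where "x_gword = [Gb, Gb, Gb, Gci]"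
definition y_gword :: "gen list" where "y_gword = [Gci, Gb, Gb, Gb]"

abbreviation aut_x :: "word \<Rightarrow> word" where "aut_x \<equiv> aut_of x_gword"
abbreviation aut_y :: "word \<Rightarrow> word" where "aut_y \<equiv> aut_of y_gword"

fun x_sq_section :: "letter \<Rightarrow> gen list" where
  "x_sq_section L1 = x_gword" | "x_sq_section L2 = [Gbi, Gc, Gbi]"
| "x_sq_section L3 = y_gword" | "x_sq_section L4 = [Gbi]"
| "x_sq_section L5 = [Gci, Gbi, Gbi, Gci]" | "x_sq_section L6 = [Gbi]"

fun y_sq_section :: "letter \<Rightarrow> gen list" where
  "y_sq_section L1 = y_gword" | "y_sq_section L2 = x_gword"
| "y_sq_section L3 = [Gbi, Gc, Gbi]" | "y_sq_section L4 = [Gbi]"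
| "y_sq_section L5 = [Gbi]" | "y_sq_section L6 = [Gci, Gbi, Gbi, Gci]"

lemma aut_x_sq_fixes_letter: "(aut_x ^^ (2 * m)) (x # v) = x # (aut_of (x_sq_section x) ^^ m) v"
proof (rule funpow_double_fixing_letter)
  fix v
  have "aut_x (aut_x (x # v)) = aut_of (x_gword @ x_gword) (x # v)"
    by (simp add: aut_of_append)
  also have "\<dots> = x # aut_of (x_sq_section x) v"
    by (rule aut_of_Cons_reduce; cases x) (simp_all add: x_gword_def y_gword_def)
  finally show "aut_x (aut_x (x # v)) = x # aut_of (x_sq_section x) v" .
qed

lemma aut_y_sq_fixes_letter: "(aut_y ^^ (2 * m)) (x # v) = x # (aut_of (y_sq_section x) ^^ m) v"
proof (rule funpow_double_fixing_letter)
  fix v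
  have "aut_y (aut_y (x # v)) = aut_of (y_gword @ y_gword) (x # v)"
    by (simp add: aut_of_append)
  also have "\<dots> = x # aut_of (y_sq_section x) v"
    by (rule aut_of_Cons_reduce; cases x) (simp_all add: x_gword_def y_gword_def)
  finally show "aut_y (aut_y (x # v)) = x # aut_of (y_sq_section x) v" .
qed

lemma order_dvd_9:
  "aut_of [Gbi, Gc, Gbi] ^^ 9 = id" "aut_of [Gci, Gbi, Gbi, Gci] ^^ 9 = id"
proof -
  have "aut_of (concat (replicate 9 [Gbi, Gc, Gbi])) = aut_of []"
    by (rule aut_of_eq_if_saturate[of 3]) code_simp
  moreover have "aut_of (concat (replicate 9 [Gci, Gbi, Gbi, Gci])) = aut_of []"
    by (rule aut_of_eq_if_saturate[of 3]) code_simp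
  ultimately show "aut_of [Gbi, Gc, Gbi] ^^ 9 = id" "aut_of [Gci, Gbi, Gbi, Gci] ^^ 9 = id"
    by (simp_all add: aut_of_replicate fun_eq_iff)
qed

definition delta :: "nat \<Rightarrow> word \<Rightarrow> word" where
  "delta j = commutator (aut_x ^^ (9 * 2 ^ j)) (aut_y ^^ (9 * 2 ^ j))"

text \<open>Below a letter other than 1, the sections of \<open>x\<^sup>2\<close> and \<open>y\<^sup>2\<close> either coincide or one of them
  has order dividing 9, so the commutator is trivial there.\<close>

lemma delta_Suc: "delta (Suc j) = at_vertex [L1] (delta j)"
proof
  fix w
  define p :: nat where "p = 9 * 2 ^ j"
  have double: "(9::nat) * 2 ^ Suc j = 2 * p" and "9 dvd p"
    and delta_j: "delta j = commutator (aut_x ^^ p) (aut_y ^^ p)"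
    by (simp_all add: p_def delta_def)
  then have finite: "aut_of [Gbi, Gc, Gbi] ^^ p = id" "aut_of [Gci, Gbi, Gbi, Gci] ^^ p = id"
    using order_dvd_9 funpow_eq_id_dvd by blast+
  show "delta (Suc j) w = at_vertex [L1] (delta j) w"
  proof (cases w)
    case Nil
    then show ?thesis
      by (simp add: delta_def at_vertex_def commutator_Nil bij_aut_of_pow aut_of_pow_Nil)
  next
    case (Cons x v)
    have "delta (Suc j) (x # v) =
        x # commutator (aut_of (x_sq_section x) ^^ p) (aut_of (y_sq_section x) ^^ p) v"
      unfolding delta_def double
      by (rule commutator_fixing_letter)
         (simp_all add: bij_aut_of_pow aut_x_sq_fixes_letter aut_y_sq_fixes_letter)
    also have "\<dots> = at_vertex [L1] (delta j) (x # v)"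
      by (cases x) (simp_all add: finite commutator_id bij_aut_of_pow at_vertex_def delta_j)
    finally show ?thesis
      using Cons by simp
  qed
qed

definition kappa_gword :: "gen list" where
  "kappa_gword = (let x9 = concat (replicate 9 x_gword); y9 = concat (replicate 9 y_gword)
                  in x9 @ y9 @ inv_gword x9 @ inv_gword y9)"

abbreviation kappa :: "word \<Rightarrow> word" where "kappa \<equiv> aut_of kappa_gword"

lemma delta_in_G: "delta j \<in> G_group_carrier"
  by (simp add: delta_def commutator_aut_of aut_of_in_G flip: aut_of_replicate)

lemma delta_eq_at_vertex: "delta j = at_vertex (replicate j L1) kappa"
proof (induction j)
  case 0
  show ?case
    by (simp add: delta_def at_vertex_Nil commutator_aut_of kappa_gword_def Let_def
        flip: aut_of_replicate)
next
  case (Suc j)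
  then show ?case
    by (simp add: delta_Suc flip: at_vertex_Cons)
qed

section \<open>\<open>\<kappa>\<close> has infinite order\<close>

lemma aut_x_L1: "aut_x (L1 # v) = L3 # aut_of [Gb, Gb, Gb] v"
  by (rule aut_of_Cons_reduce) (simp_all add: x_gword_def)

lemma aut_x_pow_eq_id: "aut_x ^^ m = id \<Longrightarrow> m = 0"
proof (induction m rule: less_induct)
  case (less m)
  show ?case
  proof (cases "even m")
    case True
    then obtain q where q: "m = 2 * q" by blast
    have "L1 # (aut_x ^^ q) v = L1 # v" for v
      using aut_x_sq_fixes_letter[of q L1 v] less.prems by (simp add: q)
    then have "aut_x ^^ q = id"
      by (simp add: fun_eq_iff)
    with less.IH q show ?thesis
      by (cases "q = 0") simp_all
  next
    case False
    then obtain q where q: "m = Suc (2 * q)" by (metis oddE Suc_eq_plus1)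
    have "(aut_x ^^ m) [L1] = aut_x ((aut_x ^^ (2 * q)) [L1])"
      by (simp add: q)
    also have "\<dots> = [L3]"
      using aut_x_sq_fixes_letter[of q L1 "[]"] by (simp add: aut_of_pow_Nil aut_x_L1)
    finally show ?thesis
      using less.prems by simp
  qed
qed

lemma kappa_section_along:
  "section_along [(L1, 3), (L3, 3), (L1, 3), (L1, 3), (L1, 3), (L5, 1)] (reduce kappa_gword)
     = Some [Gci, Gbi, Gci, Gb, Gb, Gci]"
  by code_simp

lemma kappa_section_eq_aut_x: "aut_of [Gci, Gbi, Gci, Gb, Gb, Gci] = aut_x"
  unfolding x_gword_def by (rule aut_of_eq_if_saturate[of 3]) code_simp

lemma kappa_pow_at_vertex:
  "(kappa ^^ (243 * m)) ([L1, L3, L1, L1, L1, L5] @ v) = [L1, L3, L1, L1, L1, L5] @ (aut_x ^^ m) v"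
  using section_along_Some[OF kappa_section_along, of m v] by (simp add: aut_of_reduce kappa_section_eq_aut_x)

lemma kappa_pow_eq_id: "kappa ^^ m = id \<Longrightarrow> m = 0"
proof -
  assume "kappa ^^ m = id"
  then have "kappa ^^ (243 * m) = id"
    by (simp add: funpow_eq_id_dvd)
  then have "(aut_x ^^ m) v = v" for v
    using kappa_pow_at_vertex[of m v] by simp
  then show "m = 0"
    by (intro aut_x_pow_eq_id) (simp add: fun_eq_iff)
qed

definition kappa_conj :: "word \<Rightarrow> word" where
  "kappa_conj = aut_of [Gb, Gb, Gb] \<circ> kappa \<circ> inv_into UNIV (aut_of [Gb, Gb, Gb])"

lemma bij_kappa_conj: "bij kappa_conj"
  by (simp add: kappa_conj_def bij_aut_of bij_comp bij_imp_bij_inv)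

lemma ord_kappa_conj: "P.ord kappa_conj = 0"
proof -
  have "kappa_conj ^^ m = id \<longleftrightarrow> kappa ^^ m = id" for m
    by (simp add: kappa_conj_def funpow_conj conj_eq_id_iff bij_aut_of)
  then have "kappa_conj ^^ m = id \<Longrightarrow> m = 0" for m
    using kappa_pow_eq_id by blast
  then show ?thesis
    using bij_kappa_conj by (auto simp: P.ord_eq_0 P_nat_pow)
qed

section \<open>Free abelian subgroups of every rank\<close>

lemma (in group_hom) iso_image:
  assumes "inj_on h (carrier G)"
  shows "H\<lparr>carrier := h ` carrier G\<rparr> \<cong> G"
proof -
  have "h \<in> iso G (H\<lparr>carrier := h ` carrier G\<rparr>)"
    using assms by (auto simp: iso_def hom_def bij_betw_def)
  then show ?thesis
    by (intro G.iso_sym is_isoI)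
qed

definition branch :: "nat \<Rightarrow> word" where
  "branch j = replicate j L1 @ [L3]"

lemma branch_append_eq: "branch j @ r = branch i @ s \<Longrightarrow> j = i \<and> r = s"
proof (induction j arbitrary: i)
  case 0 then show ?case by (cases i) (auto simp: branch_def)
next
  case (Suc j) then show ?case by (cases i) (auto simp: branch_def)
qed

text \<open>Conjugation by \<open>x\<^sup>2\<^sup>^\<^sup>j\<close> carries the subtree of \<open>1\<^sup>j\<^sup>+\<^sup>1\<close> onto that of \<open>1\<^sup>j3\<close>.\<close>

definition epsilon :: "nat \<Rightarrow> word \<Rightarrow> word" where
  "epsilon j = aut_x ^^ 2 ^ j \<circ> delta (Suc j) \<circ> inv_into UNIV (aut_x ^^ 2 ^ j)"

lemma aut_x_pow_replicate: "(aut_x ^^ 2 ^ j) (replicate j L1 @ u) = replicate j L1 @ aut_x u"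
proof (induction j arbitrary: u)
  case (Suc j)
  then show ?case
    using aut_x_sq_fixes_letter[of "2 ^ j" L1] by simp
qed simp

lemma epsilon_eq_at_vertex: "epsilon j = at_vertex (branch j) kappa_conj"
proof -
  have "(aut_x ^^ 2 ^ j) ((replicate j L1 @ [L1]) @ u) = branch j @ aut_of [Gb, Gb, Gb] u" for u
    by (simp add: aut_x_pow_replicate aut_x_L1 branch_def)
  then show ?thesis
    unfolding epsilon_def delta_eq_at_vertex kappa_conj_def
    by (simp add: conj_at_vertex bij_aut_of_pow bij_aut_of replicate_append_same)
qed

lemma epsilon_in_G: "epsilon j \<in> G_group_carrier"
proof -
  have "epsilon j = inv\<^bsub>P\<^esub> (aut_x ^^ 2 ^ j) \<otimes>\<^bsub>P\<^esub> delta (Suc j) \<otimes>\<^bsub>P\<^esub> aut_x ^^ 2 ^ j"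
    by (simp add: epsilon_def P_inv bij_aut_of_pow comp_assoc)
  then show ?thesis
    by (simp only: aut_of_replicate[symmetric]) (intro G.m_closed G.m_inv_closed aut_of_in_G delta_in_G)
qed

lemma epsilon_int_pow: "epsilon j [^]\<^bsub>P\<^esub> z = at_vertex (branch j) (kappa_conj [^]\<^bsub>P\<^esub> (z::int))"
  using at_vertex.hom_int_pow[of kappa_conj "branch j" z] bij_kappa_conj
  by (simp add: epsilon_eq_at_vertex)

fun embed_Zn :: "nat \<Rightarrow> (nat \<Rightarrow> int) \<Rightarrow> word \<Rightarrow> word" where
  "embed_Zn 0 k = id"
| "embed_Zn (Suc n) k = embed_Zn n k \<otimes>\<^bsub>P\<^esub> epsilon n [^]\<^bsub>P\<^esub> k n"

lemma embed_Zn_in_G: "embed_Zn n k \<in> G_group_carrier"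
proof (induction n)
  case 0
  show ?case using G.one_closed by (simp add: id_def)
next
  case (Suc n)
  then show ?case
    using P.subgroup_int_pow_closed[OF subgroup_G epsilon_in_G] by (simp only: embed_Zn.simps G.m_closed)
qed

lemma embed_Zn_outside: "(\<And>j r. j < n \<Longrightarrow> w \<noteq> branch j @ r) \<Longrightarrow> embed_Zn n k w = w"
proof (induction n)
  case (Suc n)
  then have "embed_Zn n k w = w" and "\<And>r. w \<noteq> branch n @ r"
    by simp_all
  then show ?case
    by (simp add: epsilon_int_pow at_vertex_outside)
qed simp

lemma embed_Zn_branch:
  "j < n \<Longrightarrow> embed_Zn n k (branch j @ r) = branch j @ (kappa_conj [^]\<^bsub>P\<^esub> k j) r"
proof (induction n)
  case (Suc n)
  show ?case
  proof (cases "j < n")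
    case True
    have "\<And>r'. branch j @ (kappa_conj [^]\<^bsub>P\<^esub> k j) r \<noteq> branch n @ r'"
      using True branch_append_eq by blast
    then show ?thesis
      using Suc.IH[OF True] by (simp add: epsilon_int_pow at_vertex_outside)
  next
    case False
    with Suc.prems have j: "j = n"
      by simp
    have "embed_Zn n k (branch j @ r) = branch j @ r"
      using branch_append_eq j by (intro embed_Zn_outside) blast
    then show ?thesis
      by (simp add: j epsilon_int_pow)
  qed
qed simp

lemma embed_Zn_cong: "(\<And>j. j < n \<Longrightarrow> k j = l j) \<Longrightarrow> embed_Zn n k = embed_Zn n l"
  by (induction n) simp_all

lemma embed_Zn_add: "embed_Zn n (\<lambda>j. k j + l j) = embed_Zn n k \<otimes>\<^bsub>P\<^esub> embed_Zn n l"
proof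
  fix w
  show "embed_Zn n (\<lambda>j. k j + l j) w = (embed_Zn n k \<otimes>\<^bsub>P\<^esub> embed_Zn n l) w"
  proof (cases "\<exists>j r. j < n \<and> w = branch j @ r")
    case True
    then obtain j r where "j < n" "w = branch j @ r" by blast
    then show ?thesis
      using bij_kappa_conj by (simp add: embed_Zn_branch P.int_pow_mult)
  next
    case False
    then show ?thesis by (auto simp: embed_Zn_outside)
  qed
qed

lemma embed_Zn_hom: "embed_Zn n \<in> hom (Zn_group n) P"
proof -
  have "embed_Zn n (k \<otimes>\<^bsub>Zn_group n\<^esub> l) = embed_Zn n k \<otimes>\<^bsub>P\<^esub> embed_Zn n l" for k l
    using embed_Zn_cong[of n "\<lambda>j\<in>{..<n}. k j + l j" "\<lambda>j. k j + l j"]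
    by (simp add: Zn_group_def embed_Zn_add)
  moreover have "bij (embed_Zn n k)" for k
    using embed_Zn_in_G[of n k] G.subset by auto
  ultimately show ?thesis
    by (simp add: hom_def)
qed

lemma inj_on_embed_Zn: "inj_on (embed_Zn n) (carrier (Zn_group n))"
proof (rule inj_onI)
  fix k l assume k: "k \<in> carrier (Zn_group n)" and l: "l \<in> carrier (Zn_group n)"
    and eq: "embed_Zn n k = embed_Zn n l"
  have "k j = l j" if "j < n" for j
  proof -
    have "(kappa_conj [^]\<^bsub>P\<^esub> k j) r = (kappa_conj [^]\<^bsub>P\<^esub> l j) r" for r
      using fun_cong[OF eq, of "branch j @ r"] by (simp add: embed_Zn_branch[OF that])
    then have "kappa_conj [^]\<^bsub>P\<^esub> k j = kappa_conj [^]\<^bsub>P\<^esub> l j"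
      by (simp add: fun_eq_iff)
    then show ?thesis
      using bij_kappa_conj by (simp add: P.int_pow_eq ord_kappa_conj)
  qed
  with k l show "k = l"
    by (intro PiE_ext[of k "{..<n}" "\<lambda>_. UNIV"]) (auto simp: Zn_group_def)
qed

theorem corollary11p7:
  fixes n :: nat
  shows "\<exists>H. subgroup H word_perm_group \<and> H \<subseteq> G_group_carrier \<and>
           word_perm_group\<lparr>carrier := H\<rparr> \<cong> Zn_group n"
proof -
  have "group (Zn_group n)"
    by (simp add: Zn_group_def)
  then interpret group_hom "Zn_group n" P "embed_Zn n"
    by (simp add: group_hom_def group_hom_axioms_def group_word_perm_group embed_Zn_hom)
  show ?thesis
    using img_is_subgroup iso_image[OF inj_on_embed_Zn] embed_Zn_in_G by blast
qed

end
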